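(* Let $P$ and $P'$ be two temporal patterns over a temporal sequence database $\mathcal{D}_{\text{SEQ}}$ and $\delta$ a confidence threshold. If $P'\subseteq P$ and $\dfrac{\textit{supp}(P')}{\max_{1\le k\le|P|}\{\textit{supp}(E_k)\}_{E_k\in P}}\le\delta$, then $\textit{conf}(P)\le\delta$.
   Context: $\mathcal{D}_{\text{SEQ}}$ is a finite collection of temporal sequences (lists of event instances $(\omega,[t_s,t_e])$ of temporal events $E=(\omega,T)$, ordered by start time). A temporal pattern is a list of triples $(r_{ij},E_i,E_j)$ with $r_{ij}\in\{\text{Follows},\text{Contains},\text{Overlaps}\}$; $P'\subseteq P$ means $P'$ is a sub-pattern of $P$ (its triples are among those of $P$). A sequence supports a pattern iff it has at least two instances and each triple's relation holds between some instances of the two events in the sequence. $\textit{supp}(E)$ is the number of sequences containing an instance of $E$; $\textit{supp}(P)$ the number of sequences supporting $P$; $\textit{conf}(P)=\textit{supp}(P)/\max_{E_k\in P}\textit{supp}(E_k)$, the maximum over events occurring in $P$. *)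

theory Defs
  imports Main Complex_Main
begin

type_synonym 'e inst = "'e \<times> real \<times> real"
type_synonym 'e tseq = "'e inst list"
(* A temporal sequence database: a finite collection (list, duplicates allowed) of sequences. *)
type_synonym 'e tdb = "'e tseq list"

definition lbl :: "'e inst \<Rightarrow> 'e" where "lbl a = fst a"
definition ts :: "'e inst \<Rightarrow> real" where "ts a = fst (snd a)"
definition te :: "'e inst \<Rightarrow> real" where "te a = snd (snd a)"

definition wf_seq :: "'e tseq \<Rightarrow> bool" where
  "wf_seq s \<longleftrightarrow> (\<forall>a\<in>set s. ts a \<le> te a) \<and> sorted (map ts s)"

datatype relation = Follows | Contains | Overlaps

fun holds :: "relation \<Rightarrow> 'e inst \<Rightarrow> 'e inst \<Rightarrow> bool" where
  "holds Follows a b \<longleftrightarrow> te a \<le> ts b"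
| "holds Contains a b \<longleftrightarrow> ts a \<le> ts b \<and> te b \<le> te a"
| "holds Overlaps a b \<longleftrightarrow> ts a < ts b \<and> ts b < te a \<and> te a < te b"

type_synonym 'e pattern = "(relation \<times> 'e \<times> 'e) list"

definition subpattern :: "'e pattern \<Rightarrow> 'e pattern \<Rightarrow> bool" where
  "subpattern P' P \<longleftrightarrow> set P' \<subseteq> set P"

definition events :: "'e pattern \<Rightarrow> 'e set" where
  "events P = (\<Union>(r, Ei, Ej)\<in>set P. {Ei, Ej})"

definition supports :: "'e tseq \<Rightarrow> 'e pattern \<Rightarrow> bool" where
  "supports s P \<longleftrightarrow> length s \<ge> 2 \<and>
     (\<forall>(r, Ei, Ej)\<in>set P. \<exists>i<length s. \<exists>j<length s. i \<noteq> j \<and>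
        lbl (s ! i) = Ei \<and> lbl (s ! j) = Ej \<and> holds r (s ! i) (s ! j))"

definition supp_event :: "'e tdb \<Rightarrow> 'e \<Rightarrow> nat" where
  "supp_event D E = length (filter (\<lambda>s. \<exists>a\<in>set s. lbl a = E) D)"

definition supp_pat :: "'e tdb \<Rightarrow> 'e pattern \<Rightarrow> nat" where
  "supp_pat D P = length (filter (\<lambda>s. supports s P) D)"

(* max_{E_k in P} supp(E_k); 0 for the (degenerate) empty pattern *)
definition max_event_supp :: "'e tdb \<Rightarrow> 'e pattern \<Rightarrow> nat" where
  "max_event_supp D P = Max (insert 0 (supp_event D ` events P))"

definition conf :: "'e tdb \<Rightarrow> 'e pattern \<Rightarrow> real" where
  "conf D P = real (supp_pat D P) / real (max_event_supp D P)"

end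

theory Submission
  imports Defs
begin

text \<open>Support is anti-monotone in the pattern: a sequence supporting \<open>P\<close> supports every
  sub-pattern of \<open>P\<close>. Dividing by the same denominator \<open>max_event_supp D P\<close> then
  preserves the inequality, which is all the theorem needs.\<close>

lemma length_filter_mono:
  assumes "\<And>x. P x \<Longrightarrow> Q x"
  shows "length (filter P xs) \<le> length (filter Q xs)"
  using assms by (induction xs) simp_all

lemma supports_subpattern:
  assumes "subpattern P' P" and "supports s P"
  shows "supports s P'"
  using assms unfolding subpattern_def supports_def by (simp add: subset_iff) fast

lemma supp_pat_antimono:
  assumes "subpattern P' P"
  shows "supp_pat D P \<le> supp_pat D P'"
  unfolding supp_pat_def
  using supports_subpattern[OF assms] by (rule length_filter_mono)

theorem lemma7:
  fixes D :: "'e tdb" and P P' :: "'e pattern" and \<delta> :: real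
  assumes "\<forall>s\<in>set D. wf_seq s"
    and "subpattern P' P"
    and "real (supp_pat D P') / real (max_event_supp D P) \<le> \<delta>"
  shows "conf D P \<le> \<delta>"
proof -
  have "conf D P \<le> real (supp_pat D P') / real (max_event_supp D P)"
    unfolding conf_def
    using supp_pat_antimono[OF assms(2)] by (intro divide_right_mono) simp_all
  with assms(3) show ?thesis by linarith
qed

end
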